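(* Let $G=(V,E)$ be a simple undirected graph on $n$ nodes, let $0<\epsilon<\frac13$, $\delta>0$, $p\in(0,1)$, and let $D\subseteq V$ be an $\epsilon^3$-near clique with $|D|\ge\delta n$; let $C=K_{\epsilon^2}(D)\cap D$. Let $S^{(1)}$ be a random subset of $V$ containing each node independently with probability $p/2$, and let $X^*=S^{(1)}\cap C$. Call $X^*$ representative if (1) $|K_{\epsilon^2}(D)\setminus K_{2\epsilon^2}(X^* )|<\epsilon|C|$ and (2) $|K_{2\epsilon^2}(X^* )\setminus K_{3\epsilon^2}(C)|<\epsilon^2|C|$. Then, for every outcome in which $X^*$ is representative, $|C\setminus T_\epsilon(X^* )|\le\frac{11}{2}\epsilon|C|$.
   Context: $\Gamma(v)$ denotes the set of neighbors of $v$. For $Y\subseteq V$ and $0\le\eta\le1$: $K_\eta(Y)=\{v\in V: |\Gamma(v)\cap Y|\ge(1-\eta)|Y|\}$, and $T_\epsilon(X)=K_\epsilon(K_{2\epsilon^2}(X))\cap K_{2\epsilon^2}(X)$. Each undirected edge is counted as two directed edges; a set $D\subseteq V$ is a $\gamma$-near clique if $|\{(u,v)\in D\times D:\{u,v\}\in E\}|\ge(1-\gamma)|D|(|D|-1)$. *)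

theory Defs
  imports Complex_Main
begin

definition simple_graph :: "'a set \<Rightarrow> 'a set set \<Rightarrow> bool" where
  "simple_graph V E \<longleftrightarrow> finite V \<and> (\<forall>e\<in>E. e \<subseteq> V \<and> card e = 2)"

definition nbrs :: "'a set set \<Rightarrow> 'a \<Rightarrow> 'a set" where
  "nbrs E v = {u. {u, v} \<in> E}"

definition K :: "'a set \<Rightarrow> 'a set set \<Rightarrow> real \<Rightarrow> 'a set \<Rightarrow> 'a set" where
  "K V E \<eta> Y = {v \<in> V. real (card (nbrs E v \<inter> Y)) \<ge> (1 - \<eta>) * real (card Y)}"

definition T :: "'a set \<Rightarrow> 'a set set \<Rightarrow> real \<Rightarrow> 'a set \<Rightarrow> 'a set" where
  "T V E \<epsilon> X = K V E \<epsilon> (K V E (2 * \<epsilon>^2) X) \<inter> K V E (2 * \<epsilon>^2) X"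

text \<open>Each undirected edge is counted as two ordered pairs.\<close>
definition near_clique :: "'a set \<Rightarrow> 'a set set \<Rightarrow> real \<Rightarrow> 'a set \<Rightarrow> bool" where
  "near_clique V E \<gamma> D \<longleftrightarrow> D \<subseteq> V \<and>
     real (card {(u, v) \<in> D \<times> D. {u, v} \<in> E}) \<ge> (1 - \<gamma>) * real (card D) * (real (card D) - 1)"

end

theory Submission
  imports Defs
begin

text \<open>Write \<open>Y = K(2\<epsilon>\<^sup>2, X)\<close>, so that \<open>T(\<epsilon>, X) = K(\<epsilon>, Y) \<inter> Y\<close>. A vertex of \<open>C\<close> outside
  \<open>T(\<epsilon>, X)\<close> either misses \<open>Y\<close>, which by representativeness (1) happens for fewer than \<open>\<epsilon>|C|\<close>
  vertices, or has more than \<open>\<epsilon>|Y|\<close> non-neighbours in \<open>Y\<close>. Count the non-adjacent pairs in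
  \<open>C \<times> Y\<close> from the side of \<open>Y\<close>: a vertex of \<open>Y \<inter> K(3\<epsilon>\<^sup>2, C)\<close> misses at most \<open>3\<epsilon>\<^sup>2|C|\<close>
  vertices of \<open>C\<close>, and by (2) fewer than \<open>\<epsilon>\<^sup>2|C|\<close> vertices of \<open>Y\<close> lie outside \<open>K(3\<epsilon>\<^sup>2, C)\<close>.
  Since \<open>|Y| \<ge> (1 - \<epsilon>)|C| \<ge> 2|C|/3\<close>, at most \<open>9\<epsilon>|C|/2\<close> vertices are of the second kind.\<close>

lemma nbrs_sym: "u \<in> nbrs E v \<longleftrightarrow> v \<in> nbrs E u"
  by (simp add: nbrs_def insert_commute)

lemma sum_card_non_nbrs_swap:
  assumes "finite A" "finite B"
  shows "(\<Sum>a\<in>A. card (B - nbrs E a)) = (\<Sum>b\<in>B. card (A - nbrs E b))"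
proof -
  have "(\<Sum>a\<in>A. card (B - nbrs E a)) = (\<Sum>a\<in>A. \<Sum>b\<in>B. if b \<notin> nbrs E a then 1 else 0)"
    using assms(2) by (simp add: sum.If_cases Diff_eq Collect_neg_eq)
  also have "\<dots> = (\<Sum>b\<in>B. \<Sum>a\<in>A. if a \<notin> nbrs E b then 1 else 0)"
    by (subst sum.swap) (simp add: nbrs_sym)
  also have "\<dots> = (\<Sum>b\<in>B. card (A - nbrs E b))"
    using assms(1) by (simp add: sum.If_cases Diff_eq Collect_neg_eq)
  finally show ?thesis .
qed

lemma card_non_nbrs_gt_if_notin_K:
  fixes \<eta> :: real
  assumes "finite Y" "v \<in> V" "v \<notin> K V E \<eta> Y"
  shows "\<eta> * card Y < card (Y - nbrs E v)"
proof -
  have "card Y = card (Y \<inter> nbrs E v) + card (Y - nbrs E v)"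
    using assms(1) by (rule card_Int_Diff)
  moreover have "real (card (nbrs E v \<inter> Y)) < (1 - \<eta>) * card Y"
    using assms(2,3) by (auto simp: K_def)
  ultimately show ?thesis by (simp add: Int_commute algebra_simps)
qed

lemma card_non_nbrs_le_if_in_K:
  fixes \<theta> :: real
  assumes "finite C" "y \<in> K V E \<theta> C"
  shows "card (C - nbrs E y) \<le> \<theta> * card C"
proof -
  have "card C = card (C \<inter> nbrs E y) + card (C - nbrs E y)"
    using assms(1) by (rule card_Int_Diff)
  moreover have "(1 - \<theta>) * card C \<le> real (card (nbrs E y \<inter> C))"
    using assms(2) by (auto simp: K_def)
  ultimately show ?thesis by (simp add: Int_commute algebra_simps)
qed

text \<open>Both sides count non-adjacent pairs in \<open>C \<times> Y\<close>, from \<open>C\<close> and from \<open>Y\<close> respectively.\<close>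

lemma card_diff_K_mult_le:
  fixes \<eta> \<theta> :: real
  assumes "finite V" "C \<subseteq> V" "Y \<subseteq> V" "0 \<le> \<theta>"
  shows "\<eta> * card Y * card (C - K V E \<eta> Y) \<le> \<theta> * card Y * card C + card (Y - K V E \<theta> C) * card C"
proof -
  have fin: "finite C" "finite Y"
    using assms(1-3) finite_subset by auto
  have "\<eta> * card Y * card (C - K V E \<eta> Y) = (\<Sum>v\<in>C - K V E \<eta> Y. \<eta> * card Y)"
    by simp
  also have "\<dots> \<le> (\<Sum>v\<in>C - K V E \<eta> Y. real (card (Y - nbrs E v)))"
    using fin assms(2) by (intro sum_mono less_imp_le card_non_nbrs_gt_if_notin_K[where V = V]) auto
  also have "\<dots> \<le> (\<Sum>v\<in>C. real (card (Y - nbrs E v)))"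
    using fin by (intro sum_mono2) auto
  also have "\<dots> = (\<Sum>y\<in>Y. real (card (C - nbrs E y)))"
    using sum_card_non_nbrs_swap[OF fin, of E] by (simp flip: of_nat_sum)
  also have "\<dots> \<le> (\<Sum>y\<in>Y. \<theta> * card C + (if y \<in> K V E \<theta> C then 0 else real (card C)))"
  proof (rule sum_mono)
    fix y
    have "card (C - nbrs E y) \<le> card C"
      using fin by (intro card_mono) auto
    then show "real (card (C - nbrs E y)) \<le> \<theta> * card C + (if y \<in> K V E \<theta> C then 0 else real (card C))"
      using card_non_nbrs_le_if_in_K[OF fin(1)] assms(4) by (auto intro: add_increasing)
  qed
  also have "\<dots> = \<theta> * card Y * card C + card (Y - K V E \<theta> C) * card C"
    using fin by (simp add: sum.distrib sum.If_cases Diff_eq)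
  finally show ?thesis .
qed

lemma card_diff_K_le:
  fixes \<eta> \<theta> \<mu> c :: real
  assumes "finite V" "C \<subseteq> V" "Y \<subseteq> V" "0 \<le> \<theta>" "0 \<le> \<mu>"
    and "card (Y - K V E \<theta> C) \<le> \<mu> * card C" and "card C \<le> c * card Y"
  shows "\<eta> * card (C - K V E \<eta> Y) \<le> (\<theta> + \<mu> * c) * card C"
proof (cases "card Y = 0")
  case True
  with assms(7) have "card C = 0"
    by simp
  then have "C = {}"
    using card_0_eq[OF finite_subset[OF assms(2,1)]] by simp
  then show ?thesis
    by simp
next
  case False
  have "card Y * (\<eta> * card (C - K V E \<eta> Y))
      \<le> \<theta> * card Y * card C + card (Y - K V E \<theta> C) * card C"
    using card_diff_K_mult_le[OF assms(1-4), of \<eta>] by (simp add: algebra_simps)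
  also have "\<dots> \<le> \<theta> * card Y * card C + \<mu> * (c * card Y) * card C"
  proof -
    have "card (Y - K V E \<theta> C) \<le> \<mu> * (c * card Y)"
      using assms(6) order.trans[OF _ mult_left_mono[OF assms(7,5)]] by simp
    then show ?thesis
      by (simp add: mult_right_mono)
  qed
  also have "\<dots> = card Y * ((\<theta> + \<mu> * c) * card C)"
    by (simp add: algebra_simps)
  finally show ?thesis
    using False by simp
qed

theorem claim5p7:
  fixes V :: "'a set" and E :: "'a set set" and \<epsilon> \<delta> p :: real and D S :: "'a set"
  assumes "simple_graph V E"
    and "0 < \<epsilon>" and "\<epsilon> < 1/3" and "\<delta> > 0" and "0 < p" and "p < 1"
    and "near_clique V E (\<epsilon>^3) D"
    and "real (card D) \<ge> \<delta> * real (card V)"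
    and "S \<subseteq> V"
    and rep1: "real (card (K V E (\<epsilon>^2) D - K V E (2 * \<epsilon>^2) (S \<inter> (K V E (\<epsilon>^2) D \<inter> D))))
               < \<epsilon> * real (card (K V E (\<epsilon>^2) D \<inter> D))"
    and rep2: "real (card (K V E (2 * \<epsilon>^2) (S \<inter> (K V E (\<epsilon>^2) D \<inter> D))
                           - K V E (3 * \<epsilon>^2) (K V E (\<epsilon>^2) D \<inter> D)))
               < \<epsilon>^2 * real (card (K V E (\<epsilon>^2) D \<inter> D))"
  shows "real (card ((K V E (\<epsilon>^2) D \<inter> D) - T V E \<epsilon> (S \<inter> (K V E (\<epsilon>^2) D \<inter> D))))
         \<le> 11/2 * \<epsilon> * real (card (K V E (\<epsilon>^2) D \<inter> D))"
proof -
  define C where "C = K V E (\<epsilon>^2) D \<inter> D"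
  define Y where "Y = K V E (2 * \<epsilon>^2) (S \<inter> C)"
  have fin: "finite V" "finite C" "C \<subseteq> V" "Y \<subseteq> V"
    using assms(1) by (auto simp: simple_graph_def C_def Y_def K_def intro: finite_subset)
  have "card (C - Y) \<le> card (K V E (\<epsilon>^2) D - Y)"
    using fin by (intro card_mono finite_subset[OF _ fin(1)]) (auto simp: C_def K_def)
  with rep1 have missY: "card (C - Y) < \<epsilon> * card C"
    unfolding C_def Y_def by linarith
  have "card C \<le> card Y + card (C - Y)"
    using card_Int_Diff[OF fin(2), of Y] card_mono[OF finite_subset[OF fin(4,1)], of "C \<inter> Y"] by simp
  with missY have "(1 - \<epsilon>) * card C \<le> card Y"
    by (simp add: algebra_simps)
  moreover have "2/3 * card C \<le> (1 - \<epsilon>) * card C"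
    using assms(3) by (intro mult_right_mono) auto
  ultimately have "card C \<le> 3/2 * card Y"
    by linarith
  with rep2 fin assms(2) have "\<epsilon> * card (C - K V E \<epsilon> Y) \<le> (3 * \<epsilon>^2 + \<epsilon>^2 * (3/2)) * card C"
    unfolding C_def Y_def by (intro card_diff_K_le) auto
  then have farY: "card (C - K V E \<epsilon> Y) \<le> 9/2 * \<epsilon> * card C"
    using assms(2) by (simp add: power2_eq_square algebra_simps)
  have "card (C - T V E \<epsilon> (S \<inter> C)) \<le> card ((C - Y) \<union> (C - K V E \<epsilon> Y))"
    using fin by (intro card_mono) (auto simp: T_def Y_def)
  also have "\<dots> \<le> card (C - Y) + card (C - K V E \<epsilon> Y)"
    by (rule card_Un_le)
  finally show ?thesis
    using missY farY unfolding C_def by linarith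
qed

end
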